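(* For every $0\le i\le s$, the subspace $\mathfrak{n}_i=\mathrm{span}\{y_\eta:\eta\in A_i\}$ is a Lie subalgebra of $\mathfrak{n}$, and consequently $\mathcal{L}_i=\mathfrak{n}_i/\mathfrak{m}$ is a Lie subalgebra of $\mathcal{L}=\mathfrak{n}/\mathfrak{m}$.
   Context: $K$ is a field of characteristic zero, $n\ge 2$, $\mathfrak{n}$ is the Lie algebra of strictly lower triangular $n\times n$ matrices over $K$, $A=\{(i,j): n\ge i>j\ge 1\}$, $y_{ij}=E_{ij}$ (matrix units), $y_\xi=y_{ij}$ for $\xi=(i,j)$. $M\subset A$ is such that $\mathfrak{m}=\mathrm{span}\{y_\xi:\xi\in M\}$ is an ideal of $\mathfrak{n}$. Order on $A$: $(i,j)\succ(i',j')$ iff $j<j'$, or $j=j'$ and $i>i'$. Diagram construction: Step 0: fill the places of $M$ with $\bullet$. Step $i\ge1$ (while unfilled places of $A$ remain): put $\otimes$ on the $\succ$-greatest unfilled place $(k,t)$, call it $\xi_i$; then for each $a$ with $t<a<k$ such that both $(k,a)$ and $(a,t)$ are unfilled, put $-$ on $(k,a)$ and $+$ on $(a,t)$ (if one of them is already filled, leave the other unchanged). $s$ is the total number of steps with $\otimes$. $B_i$ is the set of places of $A$ still unfilled after step $i$ (so $B_0=A\setminus M$, $B_s=\emptyset$), and $A_i=B_i\sqcup M$. *)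

theory Defs
  imports Main
begin

text \<open>Matrices over K are represented as functions nat => nat => K; the n x n
matrices used are those with entries indexed by 1..n (all spans below consist of
such matrices). Places are pairs (i,j).\<close>

type_synonym 'a mat_fn = "nat \<Rightarrow> nat \<Rightarrow> 'a"

definition places :: "nat \<Rightarrow> (nat \<times> nat) set" where
  "places n = {(i, j). j \<ge> 1 \<and> j < i \<and> i \<le> n}"

definition munit :: "nat \<times> nat \<Rightarrow> 'a::field mat_fn" where
  "munit \<xi> = (\<lambda>a b. if (a, b) = \<xi> then 1 else 0)"

definition madd :: "'a::field mat_fn \<Rightarrow> 'a mat_fn \<Rightarrow> 'a mat_fn" where
  "madd X Y = (\<lambda>a b. X a b + Y a b)"

definition msub :: "'a::field mat_fn \<Rightarrow> 'a mat_fn \<Rightarrow> 'a mat_fn" where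
  "msub X Y = (\<lambda>a b. X a b - Y a b)"

definition msmult :: "'a::field \<Rightarrow> 'a mat_fn \<Rightarrow> 'a mat_fn" where
  "msmult c X = (\<lambda>a b. c * X a b)"

definition mmult :: "nat \<Rightarrow> 'a::field mat_fn \<Rightarrow> 'a mat_fn \<Rightarrow> 'a mat_fn" where
  "mmult n X Y = (\<lambda>a b. \<Sum>c\<in>{1..n}. X a c * Y c b)"

definition lie_bracket :: "nat \<Rightarrow> 'a::field mat_fn \<Rightarrow> 'a mat_fn \<Rightarrow> 'a mat_fn" where
  "lie_bracket n X Y = msub (mmult n X Y) (mmult n Y X)"

definition unit_span :: "(nat \<times> nat) set \<Rightarrow> 'a::field mat_fn set" where
  "unit_span S = {(\<lambda>a b. \<Sum>\<xi>\<in>S. c \<xi> * munit \<xi> a b) | c. True}"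

definition is_lie_subalgebra :: "nat \<Rightarrow> 'a::field mat_fn set \<Rightarrow> 'a mat_fn set \<Rightarrow> bool" where
  "is_lie_subalgebra n L N \<longleftrightarrow> L \<subseteq> N \<and> (\<lambda>a b. 0) \<in> L \<and>
     (\<forall>X\<in>L. \<forall>Y\<in>L. madd X Y \<in> L) \<and> (\<forall>c. \<forall>X\<in>L. msmult c X \<in> L) \<and>
     (\<forall>X\<in>L. \<forall>Y\<in>L. lie_bracket n X Y \<in> L)"

definition is_lie_ideal :: "nat \<Rightarrow> 'a::field mat_fn set \<Rightarrow> 'a mat_fn set \<Rightarrow> bool" where
  "is_lie_ideal n I N \<longleftrightarrow> I \<subseteq> N \<and> (\<lambda>a b. 0) \<in> I \<and>
     (\<forall>X\<in>I. \<forall>Y\<in>I. madd X Y \<in> I) \<and> (\<forall>c. \<forall>X\<in>I. msmult c X \<in> I) \<and>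
     (\<forall>X\<in>N. \<forall>Y\<in>I. lie_bracket n X Y \<in> I)"

definition succ_pl :: "nat \<times> nat \<Rightarrow> nat \<times> nat \<Rightarrow> bool" where
  "succ_pl \<xi> \<eta> \<longleftrightarrow> snd \<xi> < snd \<eta> \<or> (snd \<xi> = snd \<eta> \<and> fst \<xi> > fst \<eta>)"

definition greatest_pl :: "(nat \<times> nat) set \<Rightarrow> nat \<times> nat" where
  "greatest_pl U = (THE \<xi>. \<xi> \<in> U \<and> (\<forall>\<eta>\<in>U. \<eta> \<noteq> \<xi> \<longrightarrow> succ_pl \<xi> \<eta>))"

text \<open>One step of the diagram construction acting on the set U of unfilled
places: put the cross on xi = (k,t) = greatest unfilled place, and for every
a with t < a < k such that both (k,a) and (a,t) are unfilled, fill both.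
(The pairs for different a are disjoint, so processing them simultaneously
agrees with processing them one by one.)\<close>
definition diagram_step :: "(nat \<times> nat) set \<Rightarrow> (nat \<times> nat) set" where
  "diagram_step U =
     (if U = {} then {} else
      (let (k, t) = greatest_pl U;
           P = {a. t < a \<and> a < k \<and> (k, a) \<in> U \<and> (a, t) \<in> U}
       in U - {(k, t)} - {(k, a) | a. a \<in> P} - {(a, t) | a. a \<in> P}))"

text \<open>B_i: places still unfilled after step i (B_0 = A - M).\<close>
definition Bset :: "nat \<Rightarrow> (nat \<times> nat) set \<Rightarrow> nat \<Rightarrow> (nat \<times> nat) set" where
  "Bset n M i = (diagram_step ^^ i) (places n - M)"

definition Aset :: "nat \<Rightarrow> (nat \<times> nat) set \<Rightarrow> nat \<Rightarrow> (nat \<times> nat) set" where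
  "Aset n M i = Bset n M i \<union> M"

definition num_steps :: "nat \<Rightarrow> (nat \<times> nat) set \<Rightarrow> nat" where
  "num_steps n M = (LEAST i. Bset n M i = {})"

end

theory Submission
  imports Defs
begin

text \<open>Read the places as a relation: a set S of places spans a subalgebra as soon as it is
transitive, since y_pq y_qr = y_pr, and the ideal property of M says that M absorbs
composition with arbitrary places on either side. Every B_i \<union> M is transitive: this holds
for A, and a step of the construction keeps it, because whenever (p,q), (q,r) survive but
(p,r) is filled, transitivity of the previous set together with absorption by M shows
that q is one of the places a of that step, so (p,q) or (q,r) was filled as well.\<close>

lemma finite_places: "finite (places n)"
  by (rule finite_subset[of _ "{0..n} \<times> {0..n}"]) (auto simp: places_def)

lemma unit_span_eq:
  assumes "finite S"
  shows "(unit_span S :: 'a::field mat_fn set) = {X. \<forall>a b. (a, b) \<notin> S \<longrightarrow> X a b = 0}"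
proof (intro set_eqI iffI)
  fix X :: "'a mat_fn"
  assume "X \<in> unit_span S"
  then obtain c where "X = (\<lambda>a b. \<Sum>\<xi>\<in>S. c \<xi> * munit \<xi> a b)"
    by (auto simp: unit_span_def)
  then show "X \<in> {X. \<forall>a b. (a, b) \<notin> S \<longrightarrow> X a b = 0}"
    by (auto simp: munit_def intro!: sum.neutral)
next
  fix X :: "'a mat_fn"
  assume "X \<in> {X. \<forall>a b. (a, b) \<notin> S \<longrightarrow> X a b = 0}"
  then have zero: "X a b = 0" if "(a, b) \<notin> S" for a b
    using that by auto
  have "X = (\<lambda>a b. \<Sum>\<xi>\<in>S. X (fst \<xi>) (snd \<xi>) * munit \<xi> a b)"
  proof (intro ext)
    fix a b
    have "(\<Sum>\<xi>\<in>S. X (fst \<xi>) (snd \<xi>) * munit \<xi> a b)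
        = (\<Sum>\<xi>\<in>S. if \<xi> = (a, b) then X a b else 0)"
      by (rule sum.cong) (auto simp: munit_def)
    also have "\<dots> = X a b"
      using assms zero by (simp add: sum.delta')
    finally show "X a b = (\<Sum>\<xi>\<in>S. X (fst \<xi>) (snd \<xi>) * munit \<xi> a b)" by simp
  qed
  then show "X \<in> unit_span S"
    unfolding unit_span_def by (intro CollectI exI[of _ "\<lambda>\<xi>. X (fst \<xi>) (snd \<xi>)"]) simp
qed

lemma munit_in_unit_span: "finite S \<Longrightarrow> \<xi> \<in> S \<Longrightarrow> (munit \<xi> :: 'a::field mat_fn) \<in> unit_span S"
  by (auto simp: unit_span_eq munit_def)

lemma unit_span_nonzero_in:
  "finite S \<Longrightarrow> X \<in> (unit_span S :: 'a::field mat_fn set) \<Longrightarrow> X a b \<noteq> 0 \<Longrightarrow> (a, b) \<in> S"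
  by (auto simp: unit_span_eq)

lemma unit_span_mono:
  "finite S \<Longrightarrow> finite T \<Longrightarrow> S \<subseteq> T \<Longrightarrow> (unit_span S :: 'a::field mat_fn set) \<subseteq> unit_span T"
  by (auto simp: unit_span_eq)

lemma lie_bracket_munit_apply:
  assumes "a \<in> {1..n}" and "k \<noteq> a"
  shows "lie_bracket n (munit (k, a)) (munit (a, t)) k t = (1::'a::field)"
proof -
  have "mmult n (munit (k, a)) (munit (a, t)) k t = (\<Sum>c\<in>{1..n}. if c = a then (1::'a) else 0)"
    unfolding mmult_def by (rule sum.cong) (auto simp: munit_def)
  also have "\<dots> = 1"
    using assms(1) by (simp add: sum.delta)
  finally have "mmult n (munit (k, a)) (munit (a, t)) k t = (1::'a)" .
  moreover have "mmult n (munit (a, t)) (munit (k, a)) k t = (0::'a)"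
    using assms(2) by (auto simp: mmult_def munit_def intro!: sum.neutral)
  ultimately show ?thesis
    by (simp add: lie_bracket_def msub_def)
qed

lemma lie_bracket_swap_apply: "lie_bracket n Y X a b = - lie_bracket n X Y a b"
  by (simp add: lie_bracket_def msub_def)

lemma lie_ideal_unit_span_absorbs:
  assumes M: "M \<subseteq> places n"
    and ideal: "is_lie_ideal n (unit_span M :: 'a::field mat_fn set) (unit_span (places n))"
  shows "places n O M \<subseteq> M" and "M O places n \<subseteq> M"
proof -
  have fin: "finite M"
    using M finite_places finite_subset by blast
  have bracket: "lie_bracket n (munit \<xi>) (munit \<eta>) \<in> (unit_span M :: 'a mat_fn set)"
    if "\<xi> \<in> places n" "\<eta> \<in> M" for \<xi> \<eta>
    using ideal munit_in_unit_span[OF finite_places that(1)] munit_in_unit_span[OF fin that(2)]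
    unfolding is_lie_ideal_def by blast
  have entry: "lie_bracket n (munit (k, a)) (munit (a, t)) k t = (1::'a)"
    if "(k, a) \<in> places n" for k a t
    using that by (intro lie_bracket_munit_apply) (auto simp: places_def)
  show "places n O M \<subseteq> M"
  proof
    fix x
    assume "x \<in> places n O M"
    then obtain k a t where x: "x = (k, t)" and ka: "(k, a) \<in> places n" and at: "(a, t) \<in> M"
      by blast
    show "x \<in> M"
      using unit_span_nonzero_in[OF fin bracket[OF ka at]] entry[OF ka, of t] by (simp add: x)
  qed
  show "M O places n \<subseteq> M"
  proof
    fix x
    assume "x \<in> M O places n"
    then obtain k a t where x: "x = (k, t)" and ka: "(k, a) \<in> M" and at: "(a, t) \<in> places n"
      by blast
    have "(k, a) \<in> places n"
      using ka M by blast
    then have "lie_bracket n (munit (a, t)) (munit (k, a)) k t = (-1::'a)"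
      by (subst lie_bracket_swap_apply) (simp add: entry)
    then show "x \<in> M"
      using unit_span_nonzero_in[OF fin bracket[OF at ka]] by (simp add: x)
  qed
qed

lemma mmult_in_unit_span:
  assumes "finite S" "trans S"
    and "X \<in> (unit_span S :: 'a::field mat_fn set)" "Y \<in> unit_span S"
  shows "mmult n X Y \<in> unit_span S"
proof -
  have X: "X a b = 0" and Y: "Y a b = 0" if "(a, b) \<notin> S" for a b
    using assms that by (auto simp: unit_span_eq)
  have "mmult n X Y a b = 0" if "(a, b) \<notin> S" for a b
    unfolding mmult_def
  proof (rule sum.neutral, rule ballI)
    fix c
    show "X a c * Y c b = 0"
      using X[of a c] Y[of c b] transD[OF assms(2), of a c b] that by (cases "(a, c) \<in> S") auto
  qed
  then show ?thesis
    using assms(1) by (simp add: unit_span_eq)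
qed

lemma trans_unit_span_lie_subalgebra:
  assumes "finite S" "finite T" "S \<subseteq> T" "trans S"
  shows "is_lie_subalgebra n (unit_span S :: 'a::field mat_fn set) (unit_span T)"
  unfolding is_lie_subalgebra_def
proof (intro conjI ballI)
  fix X Y :: "'a mat_fn"
  assume "X \<in> unit_span S" "Y \<in> unit_span S"
  then have "mmult n X Y \<in> unit_span S" "mmult n Y X \<in> unit_span S"
    using mmult_in_unit_span[OF assms(1,4)] by blast+
  then show "lie_bracket n X Y \<in> unit_span S"
    using assms(1) by (simp add: unit_span_eq lie_bracket_def msub_def)
qed (use assms in \<open>auto simp: unit_span_eq madd_def msmult_def\<close>)

lemma succ_pl_asym: "succ_pl \<xi> \<eta> \<Longrightarrow> \<not> succ_pl \<eta> \<xi>"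
  by (auto simp: succ_pl_def)

lemma greatest_pl_in:
  assumes "finite U" "U \<noteq> {}"
  shows "greatest_pl U \<in> U"
proof -
  define j where "j = Min (snd ` U)"
  define i where "i = Max (fst ` {x\<in>U. snd x = j})"
  have "j \<in> snd ` U"
    using assms by (simp add: j_def)
  then have "fst ` {x\<in>U. snd x = j} \<noteq> {}" by auto
  moreover have fin: "finite (fst ` {x\<in>U. snd x = j})"
    using assms(1) by simp
  ultimately have "i \<in> fst ` {x\<in>U. snd x = j}"
    unfolding i_def by (rule Max_in[rotated])
  then have ij: "(i, j) \<in> U" by auto
  have i_max: "\<And>x. x \<in> U \<Longrightarrow> snd x = j \<Longrightarrow> fst x \<le> i"
    using fin by (auto simp: i_def)
  have j_min: "\<And>x. x \<in> U \<Longrightarrow> j \<le> snd x"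
    using assms(1) by (simp add: j_def)
  have greatest: "\<forall>\<eta>\<in>U. \<eta> \<noteq> (i, j) \<longrightarrow> succ_pl (i, j) \<eta>"
  proof (intro ballI impI)
    fix \<eta>
    assume "\<eta> \<in> U" "\<eta> \<noteq> (i, j)"
    then have "snd \<eta> = j \<Longrightarrow> fst \<eta> < i"
      using i_max[of \<eta>] by (metis le_neq_implies_less prod.collapse)
    then show "succ_pl (i, j) \<eta>"
      using j_min[OF \<open>\<eta> \<in> U\<close>] by (auto simp: succ_pl_def)
  qed
  have unique: "\<xi> = (i, j)" if "\<xi> \<in> U" "\<forall>\<eta>\<in>U. \<eta> \<noteq> \<xi> \<longrightarrow> succ_pl \<xi> \<eta>" for \<xi>
  proof (rule ccontr)
    assume "\<xi> \<noteq> (i, j)"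
    then have "succ_pl \<xi> (i, j)" "succ_pl (i, j) \<xi>"
      using that(1) bspec[OF that(2) ij] bspec[OF greatest that(1)] by auto
    then show False
      using succ_pl_asym by blast
  qed
  have "greatest_pl U = (i, j)"
    unfolding greatest_pl_def by (rule the_equality) (use ij greatest unique in blast, use unique in blast)
  then show ?thesis
    using ij by simp
qed

lemma diagram_step_subset: "diagram_step U \<subseteq> U"
  by (auto simp: diagram_step_def Let_def split: prod.splits)

lemma trans_Un_remove_cross:
  fixes U M :: "(nat \<times> nat) set" and k t :: nat
  defines "P \<equiv> {a. t < a \<and> a < k \<and> (k, a) \<in> U \<and> (a, t) \<in> U}"
  assumes trans: "trans (U \<union> M)"
    and absorb_left: "places n O M \<subseteq> M" and absorb_right: "M O places n \<subseteq> M"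
    and U: "U \<subseteq> places n" and M: "M \<subseteq> places n" and kt: "(k, t) \<notin> M"
  shows "trans ((U - {(k, t)} - {(k, a) | a. a \<in> P} - {(a, t) | a. a \<in> P}) \<union> M)"
    (is "trans (?U' \<union> M)")
proof (rule transI)
  fix p q r
  assume pq: "(p, q) \<in> ?U' \<union> M" and qr: "(q, r) \<in> ?U' \<union> M"
  have places: "(p, q) \<in> places n" "(q, r) \<in> places n"
    using pq qr U M by auto
  then have "r < q" "q < p"
    by (auto simp: places_def)
  show "(p, r) \<in> ?U' \<union> M"
  proof (cases "(p, q) \<in> M \<or> (q, r) \<in> M")
    case True
    then show ?thesis
      using places absorb_left absorb_right by blast
  next
    case False
    then have pq': "(p, q) \<in> ?U'" and qr': "(q, r) \<in> ?U'"
      using pq qr by auto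
    have "(p, r) \<in> U \<union> M"
      using trans pq' qr' by (blast dest: transD)
    moreover have False if removed: "(p, r) \<in> U - ?U'"
    proof -
      consider "(p, r) = (k, t)" | "p = k" "r \<in> P" | "r = t" "p \<in> P"
        using removed by blast
      then show False
      proof cases
        case 1
        then have "q \<in> P"
          using pq' qr' \<open>r < q\<close> \<open>q < p\<close> by (auto simp: P_def)
        then show False
          using pq' 1 by blast
      next
        case 2
        then have "(r, t) \<in> U" "t < r"
          by (auto simp: P_def)
        then have "(q, t) \<in> U \<union> M"
          using trans qr' by (blast dest: transD)
        moreover have "(q, t) \<notin> M"
          using kt absorb_left places(1) \<open>p = k\<close> by blast
        ultimately have "q \<in> P"
          using pq' \<open>p = k\<close> \<open>t < r\<close> \<open>r < q\<close> \<open>q < p\<close> by (auto simp: P_def)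
        then show False
          using pq' \<open>p = k\<close> by blast
      next
        case 3
        then have "(k, p) \<in> U" "p < k"
          by (auto simp: P_def)
        then have "(k, q) \<in> U \<union> M"
          using trans pq' by (blast dest: transD)
        moreover have "(k, q) \<notin> M"
          using kt absorb_right places(2) \<open>r = t\<close> by blast
        ultimately have "q \<in> P"
          using qr' \<open>r = t\<close> \<open>p < k\<close> \<open>r < q\<close> \<open>q < p\<close> by (auto simp: P_def)
        then show False
          using qr' \<open>r = t\<close> by blast
      qed
    qed
    ultimately show ?thesis by blast
  qed
qed

lemma trans_diagram_step_Un:
  assumes "finite U" "trans (U \<union> M)" "U \<inter> M = {}"
    and "places n O M \<subseteq> M" "M O places n \<subseteq> M" "U \<subseteq> places n" "M \<subseteq> places n"
  shows "trans (diagram_step U \<union> M)"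
proof (cases "U = {}")
  case True
  then show ?thesis
    using assms(2) by (simp add: diagram_step_def)
next
  case False
  obtain k t where kt: "greatest_pl U = (k, t)"
    by fastforce
  then have "(k, t) \<notin> M"
    using greatest_pl_in[OF assms(1) False] assms(3) by auto
  with assms show ?thesis
    using trans_Un_remove_cross[of U M n k t] False kt by (simp add: diagram_step_def)
qed

lemma Bset_subset_trans_Un:
  assumes "places n O M \<subseteq> M" "M O places n \<subseteq> M" "M \<subseteq> places n"
  shows "Bset n M i \<subseteq> places n - M \<and> trans (Bset n M i \<union> M)"
proof (induction i)
  case 0
  have "trans (places n)"
    by (auto intro: transI simp: places_def)
  moreover have "places n - M \<union> M = places n"
    using assms(3) by auto
  ultimately show ?case
    by (simp add: Bset_def)
next
  case (Suc i)
  have "finite (Bset n M i)"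
    using Suc finite_places finite_subset by blast
  then have "trans (diagram_step (Bset n M i) \<union> M)"
    using Suc assms by (intro trans_diagram_step_Un) auto
  then show ?case
    using Suc diagram_step_subset[of "Bset n M i"] by (simp add: Bset_def) blast
qed

theorem lemma1:
  fixes n :: nat and M :: "(nat \<times> nat) set" and i :: nat
  assumes "n \<ge> 2"
    and "M \<subseteq> places n"
    and "is_lie_ideal n (unit_span M :: 'a::field_char_0 mat_fn set) (unit_span (places n))"
    and "i \<le> num_steps n M"
  shows "is_lie_subalgebra n (unit_span (Aset n M i) :: 'a mat_fn set) (unit_span (places n))
       \<and> (unit_span M :: 'a mat_fn set) \<subseteq> unit_span (Aset n M i)"
proof -
  have B: "Bset n M i \<subseteq> places n - M" "trans (Aset n M i)"
    using Bset_subset_trans_Un[OF lie_ideal_unit_span_absorbs[OF assms(2,3)] assms(2)]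
    by (auto simp: Aset_def)
  then have A: "Aset n M i \<subseteq> places n"
    using assms(2) by (auto simp: Aset_def)
  then have "finite (Aset n M i)" "finite M"
    using finite_places finite_subset assms(2) by blast+
  then show ?thesis
    using trans_unit_span_lie_subalgebra[OF _ finite_places A B(2)] unit_span_mono[of M "Aset n M i"]
    by (auto simp: Aset_def)
qed

end
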